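(* Let $G = K \rtimes_\varphi \langle t\rangle$ be a finitely generated group, where $K$ is abelian, $\langle t\rangle$ is infinite cyclic and $\varphi\in\mathrm{Aut}(K)$, and let $S$ be a finite symmetric generating set of $G$. Let $P_\varphi=\{a\in K:\ \varphi^n(a)=a\text{ for some } n\ge1\}$. Then the relative growth $r\mapsto |P_\varphi\cap S^r|$ is bounded above by a polynomial in $r$.
   Context: $K$ is written additively and $tkt^{-1}=\varphi(k)$. $S^r$ is the set of elements of word length at most $r$ with respect to $S$. *)

theory Defs
  imports Main "HOL-Computational_Algebra.Polynomial"
begin

text \<open>The semidirect product G = K \<rtimes>_phi <t> is modelled concretely on K \<times> int:
  the pair (a, m) stands for a t^m, so that t k t^-1 = phi k gives
  (a, m) * (b, n) = (a + phi^m b, m + n).\<close>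

definition phi_pow :: "('k \<Rightarrow> 'k) \<Rightarrow> int \<Rightarrow> 'k \<Rightarrow> 'k" where
  "phi_pow phi m = (if 0 \<le> m then phi ^^ nat m else inv phi ^^ nat (- m))"

definition sdp_mult :: "('k::ab_group_add \<Rightarrow> 'k) \<Rightarrow> 'k \<times> int \<Rightarrow> 'k \<times> int \<Rightarrow> 'k \<times> int" where
  "sdp_mult phi x y = (fst x + phi_pow phi (snd x) (fst y), snd x + snd y)"

definition sdp_one :: "'k::ab_group_add \<times> int" where
  "sdp_one = (0, 0)"

definition sdp_inv :: "('k::ab_group_add \<Rightarrow> 'k) \<Rightarrow> 'k \<times> int \<Rightarrow> 'k \<times> int" where
  "sdp_inv phi x = (- phi_pow phi (- snd x) (fst x), - snd x)"

definition is_aut :: "('k::ab_group_add \<Rightarrow> 'k) \<Rightarrow> bool" where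
  "is_aut phi \<longleftrightarrow> bij phi \<and> (\<forall>a b. phi (a + b) = phi a + phi b)"

fun word_ball :: "('k::ab_group_add \<Rightarrow> 'k) \<Rightarrow> ('k \<times> int) set \<Rightarrow> nat \<Rightarrow> ('k \<times> int) set" where
  "word_ball phi S 0 = {sdp_one}"
| "word_ball phi S (Suc r) = word_ball phi S r \<union> {sdp_mult phi x s | x s. x \<in> word_ball phi S r \<and> s \<in> S}"

definition symmetric_set :: "('k::ab_group_add \<Rightarrow> 'k) \<Rightarrow> ('k \<times> int) set \<Rightarrow> bool" where
  "symmetric_set phi S \<longleftrightarrow> (\<forall>s\<in>S. sdp_inv phi s \<in> S)"

text \<open>S generates G (for symmetric S: every element is a finite product of elements of S).\<close>
definition generates :: "('k::ab_group_add \<Rightarrow> 'k) \<Rightarrow> ('k \<times> int) set \<Rightarrow> bool" where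
  "generates phi S \<longleftrightarrow> (\<forall>g. \<exists>r. g \<in> word_ball phi S r)"

definition periodic_pts :: "('k \<Rightarrow> 'k) \<Rightarrow> 'k set" where
  "periodic_pts phi = {a. \<exists>n\<ge>1. (phi ^^ n) a = a}"

end

(*
  K is a Noetherian module over Z[t, t^-1], with t acting by phi: it is generated by the
  K-components of S, and the ascending chain condition passes from Z[x] (Hilbert's basis
  theorem) to cyclic and then to finitely generated modules.  Hence the chain of fixed-point
  groups of phi^(n!) stabilises, so one power phi^N fixes every periodic point, and the chain of
  kernels of delta^k, delta = phi^N - 1, stabilises at some c, so the image of delta^c contains
  no nonzero fixed point of phi^N.

  An element a of P_phi of word length at most r is a sum of at most r terms phi^m(b) with
  |m| <= C r and b among the finitely many K-components of S.  Since phi^N fixes a, applying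
  phi^(QN) with Q = C r rewrites a as a sum of terms (1 + delta)^q e with q <= 2Q and e in a
  finite set E.  Modulo the image of delta^c the binomial expansion leaves a combination of the
  elements delta^i e (i < c) with coefficients at most r (2Q + 1)^c, and this combination
  determines a.  So there are at most (r (2 C r + 1)^c + 1)^(|E| c) such a.
*)
theory Submission
  imports Defs "HOL-Library.Set_Algebras" "HOL-Library.FuncSet"
begin

section \<open>Integer multiples and additive maps\<close>

primrec nat_scale :: "nat \<Rightarrow> 'a::ab_group_add \<Rightarrow> 'a" where
  "nat_scale 0 x = 0"
| "nat_scale (Suc k) x = x + nat_scale k x"

definition int_scale :: "int \<Rightarrow> 'a::ab_group_add \<Rightarrow> 'a" where
  "int_scale n x = nat_scale (nat n) x - nat_scale (nat (- n)) x"

lemma nat_scale_add_left: "nat_scale (m + k) x = nat_scale m x + nat_scale k x"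
  by (induct m) (simp_all add: add.assoc)

lemma additive_nat_scale: "additive (nat_scale k)"
  by unfold_locales (induct k; simp add: algebra_simps)

lemma int_scale_0 [simp]: "int_scale 0 x = 0"
  by (simp add: int_scale_def)

lemma int_scale_1 [simp]: "int_scale 1 x = x"
  by (simp add: int_scale_def)

lemma int_scale_uminus: "int_scale (- n) x = - int_scale n x"
  by (simp add: int_scale_def)

lemma int_scale_add_left: "int_scale (m + n) x = int_scale m x + int_scale n x"
proof -
  have "nat (m + n) + (nat (- m) + nat (- n)) = (nat m + nat n) + nat (- (m + n))"
    by linarith
  then have "nat_scale (nat (m + n)) x + (nat_scale (nat (- m)) x + nat_scale (nat (- n)) x)
      = (nat_scale (nat m) x + nat_scale (nat n) x) + nat_scale (nat (- (m + n))) x"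
    by (metis nat_scale_add_left)
  then show ?thesis
    unfolding int_scale_def by (simp add: algebra_simps)
qed

lemma int_scale_diff_left: "int_scale (m - n) x = int_scale m x - int_scale n x"
  by (metis diff_conv_add_uminus int_scale_add_left int_scale_uminus)

lemma additive_int_scale: "additive (int_scale n)"
  by unfold_locales
    (simp add: int_scale_def additive.add[OF additive_nat_scale] algebra_simps)

lemma (in additive) nat_scale: "f (nat_scale k x) = nat_scale k (f x)"
  by (induct k) (simp_all add: zero add)

lemma (in additive) int_scale: "f (int_scale n x) = int_scale n (f x)"
  by (simp add: int_scale_def diff nat_scale)

lemma (in additive) sum_list: "f (sum_list xs) = sum_list (map f xs)"
  by (induct xs) (simp_all add: zero add)

lemma int_scale_mult: "int_scale (m * n) x = int_scale m (int_scale n x)"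
proof (induct n rule: int_induct[where k = 0])
  case base
  then show ?case by (simp add: additive.zero[OF additive_int_scale])
next
  case (step1 i)
  then show ?case
    by (simp add: distrib_left int_scale_add_left additive.add[OF additive_int_scale])
next
  case (step2 i)
  then show ?case
    by (simp add: right_diff_distrib int_scale_diff_left additive.diff[OF additive_int_scale])
qed

lemma additive_funpow:
  fixes f :: "'a::ab_group_add \<Rightarrow> 'a"
  assumes "additive f"
  shows "additive (f ^^ n)"
proof (induct n)
  case 0
  show ?case by unfold_locales simp
next
  case (Suc n)
  then show ?case
    by unfold_locales (simp add: additive.add[OF assms] additive.add[OF Suc])
qed

section \<open>Hilbert's basis theorem for \<open>\<int>[x]\<close>\<close>

lemma mono_chain_common_member:
  assumes "mono (J :: nat \<Rightarrow> 'a set)" "x \<in> (\<Union>n. J n)" "y \<in> (\<Union>n. J n)"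
  obtains n where "x \<in> J n" "y \<in> J n"
proof -
  obtain i k where "x \<in> J i" "y \<in> J k" using assms(2,3) by blast
  then have "x \<in> J (max i k)" "y \<in> J (max i k)"
    using monoD[OF assms(1), of i "max i k"] monoD[OF assms(1), of k "max i k"] by auto
  then show ?thesis by (rule that)
qed

definition int_ideal :: "int set \<Rightarrow> bool" where
  "int_ideal I \<longleftrightarrow> 0 \<in> I \<and> (\<forall>x\<in>I. \<forall>y\<in>I. x + y \<in> I) \<and> (\<forall>x\<in>I. \<forall>c. c * x \<in> I)"

lemma int_ideal_dvd: "int_ideal I \<Longrightarrow> g \<in> I \<Longrightarrow> g dvd x \<Longrightarrow> x \<in> I"
  unfolding int_ideal_def by (metis dvdE mult.commute)

lemma int_ideal_principal:
  assumes I: "int_ideal I"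
  obtains g where "g \<in> I" "\<And>x. x \<in> I \<Longrightarrow> g dvd x"
proof (cases "I \<subseteq> {0}")
  case True
  with I show ?thesis using that[of 0] by (auto simp: int_ideal_def)
next
  case False
  then obtain x where x: "x \<in> I" "x \<noteq> 0" by auto
  have "\<bar>x\<bar> \<in> I"
    using I x unfolding int_ideal_def by (metis abs_if mult_minus1)
  then obtain g where g: "g \<in> I" "g > 0" and least: "\<And>y. y \<in> I \<Longrightarrow> y > 0 \<Longrightarrow> nat g \<le> nat y"
    using ex_has_least_nat[of "\<lambda>y. y \<in> I \<and> y > 0" "\<bar>x\<bar>" nat] x(2) by auto
  show ?thesis
  proof (rule that[OF g(1)])
    fix y assume y: "y \<in> I"
    have "y + (- (y div g)) * g \<in> I"
      using I y g(1) unfolding int_ideal_def by blast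
    moreover have "y + (- (y div g)) * g = y mod g"
      by (simp add: minus_div_mult_eq_mod[symmetric])
    ultimately have "y mod g \<in> I" by simp
    moreover have "0 \<le> y mod g" "y mod g < g" using g(2) by simp_all
    ultimately have "y mod g = 0" using least[of "y mod g"] by fastforce
    then show "g dvd y" by auto
  qed
qed

text \<open>Closure under \<open>pCons 0\<close> is closure under multiplication by \<open>x\<close>.\<close>
definition poly_ideal :: "int poly set \<Rightarrow> bool" where
  "poly_ideal J \<longleftrightarrow> 0 \<in> J \<and> (\<forall>p\<in>J. \<forall>q\<in>J. p + q \<in> J) \<and> (\<forall>p\<in>J. \<forall>c. smult c p \<in> J)
     \<and> (\<forall>p\<in>J. pCons 0 p \<in> J)"

definition lead_coeffs :: "nat \<Rightarrow> int poly set \<Rightarrow> int set" where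
  "lead_coeffs d J = {coeff p d | p. p \<in> J \<and> degree p \<le> d}"

lemma poly_ideal_diff:
  assumes "poly_ideal J" "p \<in> J" "q \<in> J"
  shows "p - q \<in> J"
proof -
  have "p + smult (-1) q \<in> J"
    using assms unfolding poly_ideal_def by blast
  then show ?thesis by simp
qed

lemma int_ideal_lead_coeffs:
  assumes J: "poly_ideal J"
  shows "int_ideal (lead_coeffs d J)"
  unfolding int_ideal_def
proof (intro conjI ballI allI)
  show "0 \<in> lead_coeffs d J"
    using J unfolding lead_coeffs_def poly_ideal_def by force
next
  fix x y assume "x \<in> lead_coeffs d J" "y \<in> lead_coeffs d J"
  then obtain p q where "x + y = coeff (p + q) d" "p \<in> J" "q \<in> J" "degree p \<le> d" "degree q \<le> d"
    unfolding lead_coeffs_def by auto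
  moreover have "p + q \<in> J" "degree (p + q) \<le> d"
    using J \<open>p \<in> J\<close> \<open>q \<in> J\<close> \<open>degree p \<le> d\<close> \<open>degree q \<le> d\<close>
    by (auto simp: poly_ideal_def intro: degree_add_le)
  ultimately show "x + y \<in> lead_coeffs d J"
    unfolding lead_coeffs_def by force
next
  fix x c assume "x \<in> lead_coeffs d J"
  then obtain p where "c * x = coeff (smult c p) d" "p \<in> J" "degree p \<le> d"
    unfolding lead_coeffs_def by auto
  moreover have "smult c p \<in> J" "degree (smult c p) \<le> d"
    using J \<open>p \<in> J\<close> \<open>degree p \<le> d\<close>
    by (auto simp: poly_ideal_def intro: order.trans[OF degree_smult_le])
  ultimately show "c * x \<in> lead_coeffs d J"
    unfolding lead_coeffs_def by force
qed

lemma lead_coeffs_mono: "J \<subseteq> J' \<Longrightarrow> lead_coeffs d J \<subseteq> lead_coeffs d J'"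
  unfolding lead_coeffs_def by auto

lemma lead_coeffs_mono_degree:
  assumes "poly_ideal J" "d \<le> d'"
  shows "lead_coeffs d J \<subseteq> lead_coeffs d' J"
  using assms(2)
proof (induct d' rule: dec_induct)
  case (step n)
  have "lead_coeffs n J \<subseteq> lead_coeffs (Suc n) J"
  proof
    fix x assume "x \<in> lead_coeffs n J"
    then obtain p where p: "x = coeff p n" "p \<in> J" "degree p \<le> n"
      by (auto simp: lead_coeffs_def)
    then have "pCons 0 p \<in> J" "degree (pCons 0 p) \<le> Suc n" "x = coeff (pCons 0 p) (Suc n)"
      using assms(1) by (auto simp: poly_ideal_def intro: order.trans[OF degree_pCons_le])
    then show "x \<in> lead_coeffs (Suc n) J"
      unfolding lead_coeffs_def by blast
  qed
  with step show ?case by auto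
qed simp

lemma poly_ideal_subset_if_lead_coeffs:
  assumes J: "poly_ideal J" and U: "poly_ideal U" and "J \<subseteq> U"
    and lc: "\<And>d. lead_coeffs d U \<subseteq> lead_coeffs d J"
  shows "U \<subseteq> J"
proof -
  have "p \<in> J" if "p \<in> U" "degree p \<le> d" for p d
    using that
  proof (induct d arbitrary: p)
    case (0 p)
    then obtain q where "q \<in> J" "degree q = 0" "coeff q 0 = coeff p 0"
      using lc[of 0] by (force simp: lead_coeffs_def)
    with 0 show ?case by (metis degree_0_id le_zero_eq)
  next
    case (Suc d p)
    then obtain q where q: "q \<in> J" "degree q \<le> Suc d" "coeff q (Suc d) = coeff p (Suc d)"
      using lc[of "Suc d"] by (force simp: lead_coeffs_def)
    have "p - q \<in> U" using Suc.prems q \<open>J \<subseteq> U\<close> U by (blast intro: poly_ideal_diff)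
    moreover have "degree (p - q) \<le> d"
    proof -
      have "degree (p - q) \<le> Suc d" using Suc.prems(2) q(2) by (rule degree_diff_le)
      moreover have "coeff (p - q) (Suc d) = 0" using q(3) by simp
      ultimately show ?thesis
        by (metis le_SucE leading_coeff_0_iff degree_0 nat.distinct(1))
    qed
    ultimately have "p - q \<in> J" by (rule Suc.hyps)
    then show ?case
      using q(1) J unfolding poly_ideal_def by (metis diff_add_cancel)
  qed
  then show ?thesis by blast
qed

lemma poly_ideal_Union_chain:
  fixes J :: "nat \<Rightarrow> int poly set"
  assumes "mono J" "\<And>n. poly_ideal (J n)"
  shows "poly_ideal (\<Union>n. J n)"
  unfolding poly_ideal_def
proof (intro conjI ballI allI)
  fix p q assume "p \<in> (\<Union>n. J n)" "q \<in> (\<Union>n. J n)"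
  then obtain n where "p \<in> J n" "q \<in> J n" using mono_chain_common_member[OF assms(1)] by blast
  then show "p + q \<in> (\<Union>n. J n)" using assms(2)[of n] by (auto simp: poly_ideal_def)
next
  show "0 \<in> (\<Union>n. J n)" using assms(2)[of 0] by (auto simp: poly_ideal_def)
next
  fix p c assume "p \<in> (\<Union>n. J n)"
  then obtain n where "p \<in> J n" by blast
  then show "smult c p \<in> (\<Union>n. J n)" "pCons 0 p \<in> (\<Union>n. J n)"
    using assms(2)[of n] unfolding poly_ideal_def by blast+
qed

lemma int_ideal_Union_chain:
  fixes I :: "nat \<Rightarrow> int set"
  assumes "mono I" "\<And>n. int_ideal (I n)"
  shows "int_ideal (\<Union>n. I n)"
  unfolding int_ideal_def
proof (intro conjI ballI allI)
  fix x y assume "x \<in> (\<Union>n. I n)" "y \<in> (\<Union>n. I n)"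
  then obtain n where "x \<in> I n" "y \<in> I n" using mono_chain_common_member[OF assms(1)] by blast
  then show "x + y \<in> (\<Union>n. I n)" using assms(2)[of n] by (auto simp: int_ideal_def)
next
  show "0 \<in> (\<Union>n. I n)" using assms(2)[of 0] by (auto simp: int_ideal_def)
next
  fix x c assume "x \<in> (\<Union>n. I n)"
  then obtain n where "x \<in> I n" by blast
  then show "c * x \<in> (\<Union>n. I n)" using assms(2)[of n] unfolding int_ideal_def by blast
qed

lemma lead_coeffs_Union_reached:
  fixes J :: "nat \<Rightarrow> int poly set"
  assumes "poly_ideal (\<Union>n. J n)" "\<And>n. poly_ideal (J n)"
  obtains n where "lead_coeffs d (\<Union>n. J n) \<subseteq> lead_coeffs d (J n)"
proof -
  obtain g where g: "g \<in> lead_coeffs d (\<Union>n. J n)" "\<And>x. x \<in> lead_coeffs d (\<Union>n. J n) \<Longrightarrow> g dvd x"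
    using int_ideal_principal[OF int_ideal_lead_coeffs[OF assms(1)]] by blast
  then obtain n where "g \<in> lead_coeffs d (J n)"
    unfolding lead_coeffs_def by blast
  then show ?thesis
    using that g(2) int_ideal_dvd[OF int_ideal_lead_coeffs[OF assms(2)]] by blast
qed

theorem poly_ideal_chain_stabilizes:
  fixes J :: "nat \<Rightarrow> int poly set"
  assumes mono: "mono J" and ideal: "\<And>n. poly_ideal (J n)"
  shows "\<exists>n0. \<forall>m\<ge>n0. J m = J n0"
proof -
  define U where "U = (\<Union>n. J n)"
  have U: "poly_ideal U"
    unfolding U_def by (rule poly_ideal_Union_chain[OF mono ideal])
  have lc_mono: "lead_coeffs d (J n) \<subseteq> lead_coeffs d (J m)" if "n \<le> m" for d n m
    using mono that by (simp add: lead_coeffs_mono monoD)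
  have "\<exists>n. lead_coeffs d U \<subseteq> lead_coeffs d (J n)" for d
    using lead_coeffs_Union_reached[OF U[unfolded U_def] ideal] unfolding U_def by metis
  then obtain f where f: "\<And>d. lead_coeffs d U \<subseteq> lead_coeffs d (J (f d))"
    by metis
  have "mono (\<lambda>d. lead_coeffs d U)"
    using lead_coeffs_mono_degree[OF U] by (rule monoI)
  then have Linf: "int_ideal (\<Union>d. lead_coeffs d U)"
    using int_ideal_lead_coeffs[OF U] by (rule int_ideal_Union_chain)
  obtain g where "g \<in> (\<Union>d. lead_coeffs d U)"
    and g: "\<And>x. x \<in> (\<Union>d. lead_coeffs d U) \<Longrightarrow> g dvd x"
    using int_ideal_principal[OF Linf] by blast
  then obtain d0 where "g \<in> lead_coeffs d0 (J (f d0))" using f by blast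
  \<comment> \<open>\<open>g\<close> handles all degrees \<open>\<ge> d0\<close>; the finitely many degrees below \<open>d0\<close> are reached at stages \<open>f d\<close>.\<close>
  define M where "M = f d0 + (\<Sum>d<d0. f d)"
  have "lead_coeffs d U \<subseteq> lead_coeffs d (J M)" for d
  proof (cases "d < d0")
    case True
    then have "f d \<le> M" unfolding M_def by (simp add: trans_le_add2 member_le_sum)
    then show ?thesis using f[of d] lc_mono[of "f d" M d] by blast
  next
    case False
    have "g \<in> lead_coeffs d0 (J M)"
      using \<open>g \<in> lead_coeffs d0 (J (f d0))\<close> lc_mono[of "f d0" M d0] by (simp add: M_def subset_iff)
    then have "g \<in> lead_coeffs d (J M)"
      using lead_coeffs_mono_degree[OF ideal, of d0 d M] False by auto
    then show ?thesis
      using g int_ideal_dvd[OF int_ideal_lead_coeffs[OF ideal]] by blast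
  qed
  then have "U \<subseteq> J M"
    by (rule poly_ideal_subset_if_lead_coeffs[OF ideal U, rotated]) (auto simp: U_def)
  moreover have "J M \<subseteq> J m" "J m \<subseteq> U" if "M \<le> m" for m
    using monoD[OF mono that] by (auto simp: U_def)
  ultimately show ?thesis by blast
qed

section \<open>\<open>K\<close> as a module over \<open>\<int>[t]\<close>\<close>

locale abelian_aut =
  fixes phi :: "'k::ab_group_add \<Rightarrow> 'k"
  assumes is_aut: "is_aut phi"
begin

abbreviation "psi \<equiv> inv phi"

lemma bij_phi: "bij phi"
  using is_aut by (simp add: is_aut_def)

lemma additive_phi: "additive phi"
  using is_aut by unfold_locales (simp add: is_aut_def)

lemma phi_psi [simp]: "phi (psi x) = x"
  using bij_phi by (simp add: bij_is_surj surj_f_inv_f)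

lemma psi_phi [simp]: "psi (phi x) = x"
  using bij_phi by (simp add: bij_is_inj inv_f_f)

lemma phi_psi_pow [simp]: "(phi ^^ n) ((psi ^^ n) x) = x"
  using fn_o_inv_fn_is_id[OF bij_phi] by (metis comp_apply)

lemma psi_phi_pow [simp]: "(psi ^^ n) ((phi ^^ n) x) = x"
  using inv_fn_o_fn_is_id[OF bij_phi] by (metis comp_apply)

lemma additive_psi: "additive psi"
proof
  fix x y
  have "phi (psi x + psi y) = x + y"
    by (simp add: additive.add[OF additive_phi])
  then show "psi (x + y) = psi x + psi y"
    by (metis psi_phi)
qed

definition poly_act :: "int poly \<Rightarrow> 'k \<Rightarrow> 'k" where
  "poly_act p x = (\<Sum>i\<le>degree p. int_scale (coeff p i) ((phi ^^ i) x))"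

lemma poly_act_eq_sum:
  assumes "degree p \<le> n"
  shows "poly_act p x = (\<Sum>i\<le>n. int_scale (coeff p i) ((phi ^^ i) x))"
  unfolding poly_act_def using assms
  by (intro sum.mono_neutral_left) (auto simp: coeff_eq_0)

lemma poly_act_add_left: "poly_act (p + q) x = poly_act p x + poly_act q x"
  using poly_act_eq_sum[of p "max (degree p) (degree q)"]
    poly_act_eq_sum[of q "max (degree p) (degree q)"]
    poly_act_eq_sum[of "p + q" "max (degree p) (degree q)"]
  by (simp add: degree_add_le int_scale_add_left sum.distrib)

lemma additive_poly_act: "additive (poly_act p)"
proof
  fix x y
  show "poly_act p (x + y) = poly_act p x + poly_act p y"
    unfolding poly_act_def
    by (simp add: additive.add[OF additive_funpow[OF additive_phi]]
        additive.add[OF additive_int_scale] sum.distrib)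
qed

lemma poly_act_smult: "poly_act (smult c p) x = int_scale c (poly_act p x)"
  using poly_act_eq_sum[of "smult c p" "degree p"]
  by (simp add: degree_smult_le poly_act_def int_scale_mult additive.sum[OF additive_int_scale])

lemma poly_act_pCons: "poly_act (pCons c p) x = int_scale c x + phi (poly_act p x)"
proof -
  have "poly_act (pCons c p) x = (\<Sum>i\<le>Suc (degree p). int_scale (coeff (pCons c p) i) ((phi ^^ i) x))"
    by (rule poly_act_eq_sum) (simp add: degree_pCons_le)
  also have "\<dots> = int_scale c x + (\<Sum>i\<le>degree p. int_scale (coeff p i) (phi ((phi ^^ i) x)))"
    by (subst sum.atMost_Suc_shift) simp
  also have "\<dots> = int_scale c x + phi (poly_act p x)"
    by (simp add: poly_act_def additive.sum[OF additive_phi] additive.int_scale[OF additive_phi])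
  finally show ?thesis .
qed

lemma poly_act_mult: "poly_act (p * q) x = poly_act p (poly_act q x)"
proof (induct p)
  case 0
  then show ?case by (simp add: poly_act_def)
next
  case (pCons c p)
  have "poly_act (pCons c p * q) x = poly_act (smult c q + pCons 0 (p * q)) x" by simp
  also have "\<dots> = int_scale c (poly_act q x) + phi (poly_act (p * q) x)"
    by (simp add: poly_act_add_left poly_act_smult poly_act_pCons)
  also have "\<dots> = poly_act (pCons c p) (poly_act q x)"
    by (simp add: poly_act_pCons pCons)
  finally show ?case .
qed

sublocale poly: module poly_act
proof
  show "poly_act p (x + y) = poly_act p x + poly_act p y" for p x y
    by (rule additive.add[OF additive_poly_act])
  show "poly_act (p + q) x = poly_act p x + poly_act q x" for p q x
    by (rule poly_act_add_left)
  show "poly_act p (poly_act q x) = poly_act (p * q) x" for p q x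
    by (rule poly_act_mult[symmetric])
  show "poly_act 1 x = x" for x
    by (simp add: poly_act_def)
qed

lemma poly_act_monom: "poly_act (monom 1 k) x = (phi ^^ k) x"
proof (induct k arbitrary: x)
  case 0
  then show ?case by (simp add: one_pCons[symmetric] monom_0)
next
  case (Suc k)
  then show ?case by (simp add: monom_Suc poly_act_pCons)
qed

lemma poly_act_phi: "poly_act p (phi x) = phi (poly_act p x)"
  by (simp add: poly_act_def additive.sum[OF additive_phi] additive.int_scale[OF additive_phi]
      funpow_swap1)

lemma poly_act_psi: "poly_act p (psi x) = psi (poly_act p x)"
  by (metis poly_act_phi phi_psi psi_phi)

lemma poly_act_psi_pow: "poly_act p ((psi ^^ j) x) = (psi ^^ j) (poly_act p x)"
  by (induct j) (simp_all add: poly_act_psi)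

lemma phi_pow_poly_act: "(phi ^^ k) (poly_act p x) = poly_act p ((phi ^^ k) x)"
  using poly.scale_left_commute[of "monom 1 k" p x] by (simp only: poly_act_monom)

lemma phi_pow_psi: "(phi ^^ k) (psi x) = psi ((phi ^^ k) x)"
  by (metis funpow_swap1 phi_psi psi_phi)

lemma poly_act_monom_power: "poly_act (monom 1 k ^ q) x = (phi ^^ (k * q)) x"
  by (induct q arbitrary: x)
    (simp_all add: poly_act_monom funpow_add poly_act_mult del: poly.scale_scale)

lemma poly_act_of_nat: "poly_act (of_nat n) x = nat_scale n x"
  by (induct n) (simp_all add: poly.scale_left_distrib)

lemma funpow_phi_pow:
  assumes "int k + m \<ge> 0"
  shows "(phi ^^ k) (phi_pow phi m b) = (phi ^^ nat (int k + m)) b"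
proof (cases "m \<ge> 0")
  case True
  then show ?thesis by (simp add: phi_pow_def funpow_add nat_add_distrib)
next
  case False
  define j where "j = nat (- m)"
  have "k = (k - j) + j" "nat (int k + m) = k - j"
    using assms False unfolding j_def by linarith+
  then show ?thesis
    using False by (simp add: phi_pow_def flip: j_def) (metis comp_apply funpow_add phi_psi_pow)
qed

end

section \<open>Noetherianity of \<open>K\<close>\<close>

lemma funpow_fixed_dvd:
  assumes "(f ^^ k) x = x" "k dvd n"
  shows "(f ^^ n) x = x"
proof -
  obtain j where "n = k * j" using assms(2) by blast
  have "((f ^^ k) ^^ j) x = x" using assms(1) by (induct j) simp_all
  then show ?thesis by (simp add: \<open>n = k * j\<close> funpow_mult)
qed

context abelian_aut
begin

definition invariant_subgroup :: "'k set \<Rightarrow> bool" where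
  "invariant_subgroup N \<longleftrightarrow> poly.subspace N \<and> psi ` N \<subseteq> N"

lemma invariant_subgroupI:
  assumes "0 \<in> N" "\<And>x y. x \<in> N \<Longrightarrow> y \<in> N \<Longrightarrow> x + y \<in> N"
    and "\<And>p x. x \<in> N \<Longrightarrow> poly_act p x \<in> N" "\<And>x. x \<in> N \<Longrightarrow> psi x \<in> N"
  shows "invariant_subgroup N"
  using assms by (auto simp: invariant_subgroup_def poly.subspace_def)

context
  fixes N assumes N: "invariant_subgroup N"
begin

lemma invariant_subgroup_0: "0 \<in> N"
  and invariant_subgroup_add: "x \<in> N \<Longrightarrow> y \<in> N \<Longrightarrow> x + y \<in> N"
  and invariant_subgroup_diff: "x \<in> N \<Longrightarrow> y \<in> N \<Longrightarrow> x - y \<in> N"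
  and invariant_subgroup_poly_act: "x \<in> N \<Longrightarrow> poly_act p x \<in> N"
  using N by (auto simp: invariant_subgroup_def poly.subspace_0 poly.subspace_add
      poly.subspace_diff poly.subspace_scale)

lemma invariant_subgroup_phi_pow: "x \<in> N \<Longrightarrow> (phi ^^ k) x \<in> N"
  using invariant_subgroup_poly_act[of x "monom 1 k"] by (simp add: poly_act_monom)

lemma invariant_subgroup_psi_pow: "x \<in> N \<Longrightarrow> (psi ^^ k) x \<in> N"
  using N by (induct k) (auto simp: invariant_subgroup_def)

lemma invariant_subgroup_phi_pow_int: "x \<in> N \<Longrightarrow> phi_pow phi m x \<in> N"
  by (simp add: phi_pow_def invariant_subgroup_phi_pow invariant_subgroup_psi_pow)

end

lemma invariant_subgroup_Int:
  "invariant_subgroup M \<Longrightarrow> invariant_subgroup N \<Longrightarrow> invariant_subgroup (M \<inter> N)"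
  by (auto simp: invariant_subgroup_def poly.subspace_inter)

lemma invariant_subgroup_plus:
  assumes M: "invariant_subgroup M" and N: "invariant_subgroup N"
  shows "invariant_subgroup (M + N)"
proof (rule invariant_subgroupI)
  show "0 \<in> M + N"
    using set_plus_intro[OF invariant_subgroup_0[OF M] invariant_subgroup_0[OF N]] by simp
next
  fix u v assume "u \<in> M + N" "v \<in> M + N"
  then obtain x y x' y' where "u = x + y" "v = x' + y'" "x \<in> M" "x' \<in> M" "y \<in> N" "y' \<in> N"
    by (meson set_plus_elim)
  then show "u + v \<in> M + N"
    using set_plus_intro[of "x + x'" M "y + y'" N] invariant_subgroup_add[OF M] invariant_subgroup_add[OF N]
    by (simp add: algebra_simps)
next
  fix u p assume "u \<in> M + N"
  then obtain x y where u: "u = x + y" "x \<in> M" "y \<in> N" by (meson set_plus_elim)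
  show "poly_act p u \<in> M + N"
    using u invariant_subgroup_poly_act[OF M] invariant_subgroup_poly_act[OF N]
    by (simp add: poly.scale_right_distrib set_plus_intro)
  show "psi u \<in> M + N"
    using u M N by (auto simp: additive.add[OF additive_psi] invariant_subgroup_def)
qed

definition acc_between :: "'k set \<Rightarrow> 'k set \<Rightarrow> bool" where
  "acc_between L M \<longleftrightarrow> (\<forall>N :: nat \<Rightarrow> 'k set.
      mono N \<and> (\<forall>n. invariant_subgroup (N n) \<and> L \<subseteq> N n \<and> N n \<subseteq> M) \<longrightarrow> (\<exists>n0. \<forall>m\<ge>n0. N m = N n0))"

lemma acc_betweenI:
  assumes "\<And>N :: nat \<Rightarrow> 'k set. mono N \<Longrightarrow> (\<And>n. invariant_subgroup (N n)) \<Longrightarrow> (\<And>n. L \<subseteq> N n)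
      \<Longrightarrow> (\<And>n. N n \<subseteq> M) \<Longrightarrow> \<exists>n0. \<forall>m\<ge>n0. N m = N n0"
  shows "acc_between L M"
  unfolding acc_between_def by (intro allI impI) (rule assms; simp)

lemma acc_betweenD:
  fixes N :: "nat \<Rightarrow> 'k set"
  assumes "acc_between L M" "mono N" "\<And>n. invariant_subgroup (N n)" "\<And>n. L \<subseteq> N n"
    "\<And>n. N n \<subseteq> M"
  shows "\<exists>n0. \<forall>m\<ge>n0. N m = N n0"
  using assms(1)[unfolded acc_between_def, rule_format, of N] assms(2-) by simp

lemma invariant_subgroup_eq_by_modular_law:
  assumes X: "invariant_subgroup X" and Y: "invariant_subgroup Y" and L: "invariant_subgroup L"
    and "X \<subseteq> Y" "X \<inter> L = Y \<inter> L" "X + L = Y + L"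
  shows "X = Y"
proof
  show "Y \<subseteq> X"
  proof
    fix y assume y: "y \<in> Y"
    then have "y \<in> X + L"
      using \<open>X + L = Y + L\<close> set_plus_intro[OF y invariant_subgroup_0[OF L]] by simp
    then obtain x l where xl: "y = x + l" "x \<in> X" "l \<in> L" by (rule set_plus_elim)
    then have "l \<in> Y \<inter> L"
      using y \<open>X \<subseteq> Y\<close> invariant_subgroup_diff[OF Y] by (metis IntI add_diff_cancel_left' subsetD)
    then show "y \<in> X"
      using xl \<open>X \<inter> L = Y \<inter> L\<close> invariant_subgroup_add[OF X] by blast
  qed
qed fact

lemma acc_between_trans:
  assumes L': "invariant_subgroup L'" and M: "invariant_subgroup M"
    and "L \<subseteq> L'" "L' \<subseteq> M" and acc1: "acc_between L L'" and acc2: "acc_between L' M"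
  shows "acc_between L M"
proof (rule acc_betweenI)
  fix N :: "nat \<Rightarrow> 'k set"
  assume mono: "mono N" and N: "\<And>n. invariant_subgroup (N n)" "\<And>n. L \<subseteq> N n" "\<And>n. N n \<subseteq> M"
  have "mono (\<lambda>n. N n \<inter> L')" using mono by (auto simp: mono_def)
  moreover have "L \<subseteq> N n \<inter> L'" for n using N(2) \<open>L \<subseteq> L'\<close> by blast
  ultimately obtain a1 where a1: "\<forall>m\<ge>a1. N m \<inter> L' = N a1 \<inter> L'"
    using acc_betweenD[OF acc1, of "\<lambda>n. N n \<inter> L'"] invariant_subgroup_Int[OF N(1) L']
    by (metis inf.cobounded2)
  have "mono (\<lambda>n. N n + L')"
    using mono by (auto simp: mono_def set_plus_def)
  moreover have "L' \<subseteq> N n + L'" for n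
    using set_plus_intro[OF invariant_subgroup_0[OF N(1)], of _ L'] by force
  moreover have "N n + L' \<subseteq> M" for n
  proof
    fix z assume "z \<in> N n + L'"
    then obtain a b where "z = a + b" "a \<in> N n" "b \<in> L'" by (rule set_plus_elim)
    then show "z \<in> M" using N(3) \<open>L' \<subseteq> M\<close> invariant_subgroup_add[OF M] by blast
  qed
  ultimately obtain a2 where a2: "\<forall>m\<ge>a2. N m + L' = N a2 + L'"
    using acc_betweenD[OF acc2, of "\<lambda>n. N n + L'"] invariant_subgroup_plus[OF N(1) L']
    by metis
  have "N (max a1 a2) = N m" if "max a1 a2 \<le> m" for m
  proof (rule invariant_subgroup_eq_by_modular_law[OF N(1) N(1) L'])
    show "N (max a1 a2) \<subseteq> N m" using monoD[OF mono that] .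
    show "N (max a1 a2) \<inter> L' = N m \<inter> L'"
      using a1[rule_format, of m] a1[rule_format, of "max a1 a2"] that by simp
    show "N (max a1 a2) + L' = N m + L'"
      using a2[rule_format, of m] a2[rule_format, of "max a1 a2"] that by simp
  qed
  then show "\<exists>n0. \<forall>m\<ge>n0. N m = N n0" by metis
qed

definition cyclic_span :: "'k \<Rightarrow> 'k set" where
  "cyclic_span a = {(psi ^^ j) (poly_act p a) | j p. True}"

lemma invariant_cyclic_span: "invariant_subgroup (cyclic_span a)"
proof (rule invariant_subgroupI)
  show "0 \<in> cyclic_span a"
    unfolding cyclic_span_def by (rule CollectI, rule exI[of _ 0], rule exI[of _ 0]) simp
next
  fix u v assume "u \<in> cyclic_span a" "v \<in> cyclic_span a"
  then obtain j p k q where u: "u = (psi ^^ j) (poly_act p a)" and v: "v = (psi ^^ k) (poly_act q a)"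
    unfolding cyclic_span_def by blast
  have shift: "(psi ^^ (i + l)) (poly_act (monom 1 l * r) a) = (psi ^^ i) (poly_act r a)" for i l r
  proof -
    have "poly_act (monom 1 l * r) a = (phi ^^ l) (poly_act r a)"
      by (simp only: poly_act_mult poly_act_monom)
    then show ?thesis
      by (simp only: funpow_add comp_apply psi_phi_pow)
  qed
  have "u + v = (psi ^^ (j + k)) (poly_act (monom 1 k * p) a) + (psi ^^ (k + j)) (poly_act (monom 1 j * q) a)"
    by (simp only: u v shift)
  also have "\<dots> = (psi ^^ (j + k)) (poly_act (monom 1 k * p + monom 1 j * q) a)"
    by (simp only: add.commute[of k j] poly.scale_left_distrib
        additive.add[OF additive_funpow[OF additive_psi]])
  finally show "u + v \<in> cyclic_span a"
    unfolding cyclic_span_def by blast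
next
  fix u r assume "u \<in> cyclic_span a"
  then obtain j p where u: "u = (psi ^^ j) (poly_act p a)"
    unfolding cyclic_span_def by blast
  have "poly_act r u = (psi ^^ j) (poly_act (r * p) a)"
    by (simp add: u poly_act_psi_pow)
  moreover have "psi u = (psi ^^ Suc j) (poly_act p a)"
    by (simp add: u)
  ultimately show "poly_act r u \<in> cyclic_span a" "psi u \<in> cyclic_span a"
    unfolding cyclic_span_def by blast+
qed

text \<open>Chains of invariant subgroups of \<open>L + cyclic_span a\<close> containing \<open>L\<close> correspond to chains
  of ideals \<open>{p. poly_act p a \<in> N n}\<close> of \<open>\<int>[x]\<close>.\<close>
lemma acc_between_cyclic:
  assumes L: "invariant_subgroup L" and M: "M \<subseteq> L + cyclic_span a"
  shows "acc_between L M"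
proof (rule acc_betweenI)
  fix N :: "nat \<Rightarrow> 'k set"
  assume mono: "mono N" and N: "\<And>n. invariant_subgroup (N n)" "\<And>n. L \<subseteq> N n" "\<And>n. N n \<subseteq> M"
  define I where "I n = {p. poly_act p a \<in> N n}" for n
  have "poly_ideal (I n)" for n
  proof -
    have mult: "q * p \<in> I n" if "p \<in> I n" for p q
      using that invariant_subgroup_poly_act[OF N(1)] by (simp add: I_def flip: poly.scale_scale)
    have "smult c p \<in> I n" "pCons 0 p \<in> I n" if "p \<in> I n" for c p
      using mult[OF that, of "[:c:]"] mult[OF that, of "[:0, 1:]"] by simp_all
    then show ?thesis
      using invariant_subgroup_0[OF N(1)] invariant_subgroup_add[OF N(1)]
      by (simp add: I_def poly_ideal_def poly.scale_left_distrib)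
  qed
  moreover have "mono I" using mono unfolding I_def mono_def by auto
  ultimately obtain n0 where n0: "\<forall>m\<ge>n0. I m = I n0"
    using poly_ideal_chain_stabilizes by blast
  have "N m \<subseteq> N n0" if "n0 \<le> m" for m
  proof
    fix x assume x: "x \<in> N m"
    then obtain l j p where xl: "x = l + (psi ^^ j) (poly_act p a)" "l \<in> L"
      using N(3)[of m] M unfolding cyclic_span_def by (auto elim!: set_plus_elim)
    have "(phi ^^ j) x - (phi ^^ j) l = poly_act p a"
      by (simp add: xl additive.add[OF additive_funpow[OF additive_phi]])
    moreover have "(phi ^^ j) x \<in> N m" "(phi ^^ j) l \<in> N m"
      using x xl(2) N(2)[of m] by (auto intro: invariant_subgroup_phi_pow[OF N(1)])
    ultimately have "p \<in> I m"
      unfolding I_def using invariant_subgroup_diff[OF N(1)] by (metis mem_Collect_eq)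
    then have "poly_act p a \<in> N n0" using n0 that unfolding I_def by blast
    then show "x \<in> N n0"
      using xl N(2)[of n0] invariant_subgroup_psi_pow[OF N(1)] invariant_subgroup_add[OF N(1)]
      by blast
  qed
  then show "\<exists>n0. \<forall>m\<ge>n0. N m = N n0"
    using monoD[OF mono] by (blast intro: antisym)
qed

definition invariant_span :: "'k set \<Rightarrow> 'k set" where
  "invariant_span A = \<Inter>{N. invariant_subgroup N \<and> A \<subseteq> N}"

lemma invariant_invariant_span: "invariant_subgroup (invariant_span A)"
  unfolding invariant_span_def invariant_subgroup_def poly.subspace_def by blast

lemma invariant_span_superset: "A \<subseteq> invariant_span A"
  unfolding invariant_span_def by blast

lemma invariant_span_least: "invariant_subgroup N \<Longrightarrow> A \<subseteq> N \<Longrightarrow> invariant_span A \<subseteq> N"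
  unfolding invariant_span_def by blast

lemma invariant_span_mono: "A \<subseteq> B \<Longrightarrow> invariant_span A \<subseteq> invariant_span B"
  unfolding invariant_span_def by blast

lemma invariant_span_insert: "invariant_span (insert a A) \<subseteq> invariant_span A + cyclic_span a"
proof (rule invariant_span_least)
  show "invariant_subgroup (invariant_span A + cyclic_span a)"
    by (intro invariant_subgroup_plus invariant_invariant_span invariant_cyclic_span)
  have "a \<in> cyclic_span a"
    unfolding cyclic_span_def by (rule CollectI, rule exI[of _ 0], rule exI[of _ 1]) simp
  then have "0 + a \<in> invariant_span A + cyclic_span a"
    by (intro set_plus_intro invariant_subgroup_0[OF invariant_invariant_span])
  moreover have "b + 0 \<in> invariant_span A + cyclic_span a" if "b \<in> A" for b
    using that invariant_span_superset invariant_subgroup_0[OF invariant_cyclic_span] by blast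
  ultimately show "insert a A \<subseteq> invariant_span A + cyclic_span a" by auto
qed

lemma acc_invariant_span: "finite A \<Longrightarrow> acc_between {0} (invariant_span A)"
proof (induct A rule: finite_induct)
  case empty
  have "invariant_span {} \<subseteq> {0}"
    by (rule invariant_span_least) (simp_all add: invariant_subgroup_def additive.zero[OF additive_psi])
  show ?case
  proof (rule acc_betweenI)
    fix N :: "nat \<Rightarrow> 'k set"
    assume "\<And>n. {0} \<subseteq> N n" "\<And>n. N n \<subseteq> invariant_span {}"
    then have "N n = {0}" for n using \<open>invariant_span {} \<subseteq> {0}\<close> by blast
    then show "\<exists>n0. \<forall>m\<ge>n0. N m = N n0" by simp
  qed
next
  case (insert a A)
  show ?case
  proof (rule acc_between_trans[OF invariant_invariant_span invariant_invariant_span])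
    show "{0} \<subseteq> invariant_span A"
      using invariant_subgroup_0[OF invariant_invariant_span] by blast
    show "invariant_span A \<subseteq> invariant_span (insert a A)"
      by (rule invariant_span_mono) blast
    show "acc_between (invariant_span A) (invariant_span (insert a A))"
      by (rule acc_between_cyclic[OF invariant_invariant_span invariant_span_insert])
  qed (rule insert)
qed

theorem invariant_chain_stabilizes:
  fixes N :: "nat \<Rightarrow> 'k set"
  assumes "finite A" "invariant_span A = UNIV" "mono N" "\<And>n. invariant_subgroup (N n)"
  shows "\<exists>n0. \<forall>m\<ge>n0. N m = N n0"
  using acc_betweenD[OF acc_invariant_span[OF assms(1)] assms(3,4)] assms(2)
    invariant_subgroup_0[OF assms(4)] by blast

lemma invariant_fixed_points: "invariant_subgroup {x. (phi ^^ k) x = x}"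
proof (rule invariant_subgroupI)
  show "0 \<in> {x. (phi ^^ k) x = x}"
    by (simp add: additive.zero[OF additive_funpow[OF additive_phi]])
  show "x + y \<in> {x. (phi ^^ k) x = x}" if "x \<in> {x. (phi ^^ k) x = x}" "y \<in> {x. (phi ^^ k) x = x}" for x y
    using that by (simp add: additive.add[OF additive_funpow[OF additive_phi]])
  show "poly_act p x \<in> {x. (phi ^^ k) x = x}" if "x \<in> {x. (phi ^^ k) x = x}" for p x
    using that by (simp add: phi_pow_poly_act)
  show "psi x \<in> {x. (phi ^^ k) x = x}" if "x \<in> {x. (phi ^^ k) x = x}" for x
    using that by (simp add: phi_pow_psi)
qed

lemma invariant_kernel: "invariant_subgroup {x. poly_act q x = 0}"
proof (rule invariant_subgroupI)
  show "0 \<in> {x. poly_act q x = 0}" by simp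
  show "x + y \<in> {x. poly_act q x = 0}" if "x \<in> {x. poly_act q x = 0}" "y \<in> {x. poly_act q x = 0}" for x y
    using that by (simp add: poly.scale_right_distrib)
  show "poly_act p x \<in> {x. poly_act q x = 0}" if "x \<in> {x. poly_act q x = 0}" for p x
    using that poly.scale_left_commute[of q p x] by simp
  show "psi x \<in> {x. poly_act q x = 0}" if "x \<in> {x. poly_act q x = 0}" for x
    using that by (simp add: poly_act_psi additive.zero[OF additive_psi])
qed

context
  fixes A assumes A: "finite A" "invariant_span A = UNIV"
begin

text \<open>A point of period \<open>k\<close> is fixed by \<open>\<phi>\<^bsup>n!\<^esup>\<close> for every \<open>n \<ge> k\<close>, so the periodic points form the
  union of the increasing chain of fixed-point groups of \<open>\<phi>\<^bsup>n!\<^esup>\<close>.\<close>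
lemma periodic_pts_fixed_by_power:
  obtains N where "N > 0" "\<And>a. a \<in> periodic_pts phi \<Longrightarrow> (phi ^^ N) a = a"
proof -
  define Fix where "Fix n = {x. (phi ^^ fact n) x = x}" for n
  have "mono Fix"
  proof (rule monoI, rule subsetI)
    fix m n x assume "m \<le> n" "x \<in> Fix m"
    then show "x \<in> Fix n"
      unfolding Fix_def using funpow_fixed_dvd[OF _ fact_dvd[OF \<open>m \<le> n\<close>]] by simp
  qed
  moreover have "invariant_subgroup (Fix n)" for n
    unfolding Fix_def by (rule invariant_fixed_points)
  ultimately obtain n0 where n0: "\<forall>m\<ge>n0. Fix m = Fix n0"
    using invariant_chain_stabilizes[OF A] by blast
  have "(phi ^^ fact n0) a = a" if a: "a \<in> periodic_pts phi" for a
  proof -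
    obtain k where "k \<ge> 1" "(phi ^^ k) a = a"
      using a by (auto simp: periodic_pts_def)
    moreover have "k dvd fact (max k n0)" using \<open>k \<ge> 1\<close> by (simp add: dvd_fact)
    ultimately have "a \<in> Fix (max k n0)"
      unfolding Fix_def using funpow_fixed_dvd[where f = phi and k = k and x = a] by simp
    then show ?thesis using n0[rule_format, of "max k n0"] unfolding Fix_def by auto
  qed
  then show ?thesis using that[of "fact n0"] by simp
qed

lemma poly_act_power_kernel_stabilizes:
  obtains c where "\<And>y. poly_act (p ^ Suc c) y = 0 \<Longrightarrow> poly_act (p ^ c) y = 0"
proof -
  define Ker where "Ker k = {x. poly_act (p ^ k) x = 0}" for k
  have "mono Ker"
  proof (rule monoI, rule subsetI)
    fix k l x assume "k \<le> l" "x \<in> Ker k"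
    then have "poly_act (p ^ (l - k)) (poly_act (p ^ k) x) = 0"
      by (simp only: Ker_def mem_Collect_eq poly.scale_zero_right)
    then show "x \<in> Ker l"
      using \<open>k \<le> l\<close> by (simp add: Ker_def flip: power_add)
  qed
  moreover have "invariant_subgroup (Ker k)" for k
    unfolding Ker_def by (rule invariant_kernel)
  ultimately obtain c where "\<forall>m\<ge>c. Ker m = Ker c"
    using invariant_chain_stabilizes[OF A] by blast
  then have stable: "Ker (Suc c) = Ker c"
    by (metis le_SucI order_refl)
  show ?thesis
  proof (rule that)
    fix y assume "poly_act (p ^ Suc c) y = 0"
    then have "y \<in> Ker (Suc c)" unfolding Ker_def by (rule CollectI)
    then have "y \<in> Ker c" by (simp only: stable)
    then show "poly_act (p ^ c) y = 0" unfolding Ker_def by (rule CollectD)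
  qed
qed

end

end

section \<open>Counting periodic points in balls\<close>

context abelian_aut
begin

definition twisted_sums :: "'k set \<Rightarrow> nat \<Rightarrow> nat \<Rightarrow> 'k set" where
  "twisted_sums B Q r = {sum_list (map (\<lambda>(m, b). phi_pow phi m b) L) | L.
      length L \<le> r \<and> (\<forall>(m, b)\<in>set L. b \<in> B \<and> \<bar>m\<bar> \<le> int Q)}"

lemma word_ball_twisted_sums:
  assumes C: "\<And>s. s \<in> S \<Longrightarrow> \<bar>snd s\<bar> \<le> int C"
  shows "x \<in> word_ball phi S r \<Longrightarrow> fst x \<in> twisted_sums (fst ` S) (C * r) r \<and> \<bar>snd x\<bar> \<le> int (C * r)"
proof (induct r arbitrary: x)
  case 0
  then show ?case
    unfolding twisted_sums_def by (auto simp: sdp_one_def intro!: exI[of _ "[]"])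
next
  case (Suc r)
  show ?case
  proof (cases "x \<in> word_ball phi S r")
    case True
    then obtain L where L: "length L \<le> r" "\<forall>(m, b)\<in>set L. b \<in> fst ` S \<and> \<bar>m\<bar> \<le> int (C * r)"
        "fst x = sum_list (map (\<lambda>(m, b). phi_pow phi m b) L)" and "\<bar>snd x\<bar> \<le> int (C * r)"
      using Suc.hyps unfolding twisted_sums_def by blast
    moreover have "int (C * r) \<le> int (C * Suc r)" by simp
    ultimately show ?thesis
      unfolding twisted_sums_def by (fastforce intro!: exI[of _ L])
  next
    case False
    then obtain y s where x: "x = sdp_mult phi y s" and "y \<in> word_ball phi S r" "s \<in> S"
      using Suc.prems by auto
    then obtain L where L: "length L \<le> r" "\<forall>(m, b)\<in>set L. b \<in> fst ` S \<and> \<bar>m\<bar> \<le> int (C * r)"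
        "fst y = sum_list (map (\<lambda>(m, b). phi_pow phi m b) L)" and y: "\<bar>snd y\<bar> \<le> int (C * r)"
      using Suc.hyps unfolding twisted_sums_def by blast
    have "\<bar>snd x\<bar> \<le> int (C * Suc r)"
      using y C[OF \<open>s \<in> S\<close>] by (simp add: x sdp_mult_def)
    moreover have "fst x = sum_list (map (\<lambda>(m, b). phi_pow phi m b) (L @ [(snd y, fst s)]))"
      using L(3) by (simp add: x sdp_mult_def)
    moreover have "\<forall>(m, b)\<in>set (L @ [(snd y, fst s)]). b \<in> fst ` S \<and> \<bar>m\<bar> \<le> int (C * Suc r)"
      using L(2) y \<open>s \<in> S\<close> by fastforce
    ultimately show ?thesis
      using L(1) unfolding twisted_sums_def by (intro conjI CollectI exI[of _ "L @ [(snd y, fst s)]"]) auto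
  qed
qed

lemma twisted_sums_subset_invariant_span: "twisted_sums B Q r \<subseteq> invariant_span B"
proof -
  have "sum_list (map (\<lambda>(m, b). phi_pow phi m b) L) \<in> invariant_span B" if "\<forall>(m, b)\<in>set L. b \<in> B" for L
    using that
  proof (induct L)
    case (Cons mb L)
    then show ?case
      using invariant_span_superset[of B]
        invariant_subgroup_phi_pow_int[OF invariant_invariant_span, where x = "snd mb" and m = "fst mb"]
      by (auto intro!: invariant_subgroup_add[OF invariant_invariant_span])
  qed (simp add: invariant_subgroup_0[OF invariant_invariant_span])
  then show ?thesis
    unfolding twisted_sums_def by fastforce
qed

lemma invariant_span_generators:
  assumes "generates phi S" "\<And>s. s \<in> S \<Longrightarrow> \<bar>snd s\<bar> \<le> int C"
  shows "invariant_span (fst ` S) = UNIV"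
proof -
  have "a \<in> invariant_span (fst ` S)" for a
  proof -
    obtain r where "(a, 0) \<in> word_ball phi S r"
      using assms(1) unfolding generates_def by blast
    then have "a \<in> twisted_sums (fst ` S) (C * r) r"
      using word_ball_twisted_sums[OF assms(2)] by fastforce
    then show ?thesis using twisted_sums_subset_invariant_span by blast
  qed
  then show ?thesis by blast
qed

end

lemma finite_abs_bounded:
  assumes "finite S"
  obtains C :: nat where "\<And>s. s \<in> S \<Longrightarrow> \<bar>f s :: int\<bar> \<le> int C"
proof
  show "\<bar>f s\<bar> \<le> int (nat (\<Sum>s\<in>S. \<bar>f s\<bar>))" if "s \<in> S" for s
    using member_le_sum[OF _ _ assms, of s "\<lambda>s. \<bar>f s\<bar>"] that by simp
qed

lemma polynomially_bounded:
  fixes f :: "nat \<Rightarrow> nat"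
  assumes "\<And>r. f r \<le> (r * (2 * (C * r) + 1) ^ c + 1) ^ m"
  shows "\<exists>p :: real poly. \<forall>r. real (f r) \<le> poly p (real r)"
proof (intro exI allI)
  fix r
  have "real (f r) \<le> real ((r * (2 * (C * r) + 1) ^ c + 1) ^ m)"
    using assms by (simp only: of_nat_le_iff)
  also have "\<dots> = poly (([:0, 1:] * [:1, 2 * real C:] ^ c + 1) ^ m) (real r)"
    by (simp add: poly_power algebra_simps)
  finally show "real (f r) \<le> poly (([:0, 1:] * [:1, 2 * real C:] ^ c + 1) ^ m) (real r)" .
qed

lemma binomial_split_power:
  fixes x :: "'a::comm_semiring_1"
  shows "\<exists>R. (x + 1) ^ q = (\<Sum>k<c. of_nat (q choose k) * x ^ k) + x ^ c * R"
proof -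
  define g where "g k = of_nat (q choose k) * x ^ k" for k
  have "(x + 1) ^ q = (\<Sum>k\<le>q. g k)"
    by (simp add: binomial_ring g_def)
  also have "\<dots> = (\<Sum>k\<in>{..<c} \<union> {c..q}. g k)"
    by (rule sum.mono_neutral_left) (auto simp: g_def binomial_eq_0)
  also have "\<dots> = (\<Sum>k<c. g k) + (\<Sum>k\<in>{c..q}. g k)"
    by (rule sum.union_disjoint) auto
  also have "(\<Sum>k\<in>{c..q}. g k) = x ^ c * (\<Sum>k\<in>{c..q}. of_nat (q choose k) * x ^ (k - c))"
    unfolding sum_distrib_left
  proof (rule sum.cong)
    fix k assume "k \<in> {c..q}"
    then have "x ^ k = x ^ c * x ^ (k - c)" by (simp flip: power_add)
    then show "g k = x ^ c * (of_nat (q choose k) * x ^ (k - c))"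
      by (simp add: g_def ac_simps)
  qed simp
  finally show ?thesis unfolding g_def by blast
qed

lemma binomial_le_power_bound:
  assumes "q \<le> Q" "i < c"
  shows "q choose i \<le> (Q + 1) ^ c"
proof -
  have "q choose i \<le> q ^ i"
    by (cases "i \<le> q") (simp_all add: binomial_le_pow binomial_eq_0)
  also have "\<dots> \<le> (Q + 1) ^ i" using assms(1) by (intro power_mono) auto
  also have "\<dots> \<le> (Q + 1) ^ c" using assms(2) by (intro power_increasing) auto
  finally show ?thesis .
qed

locale periodic_counting = abelian_aut phi for phi :: "'k::ab_group_add \<Rightarrow> 'k" +
  fixes N c :: nat
  assumes N_pos: "N > 0"
    and periodic_fixed: "a \<in> periodic_pts phi \<Longrightarrow> (phi ^^ N) a = a"
    and kernel_stable: "poly_act ((monom 1 N - 1) ^ Suc c) y = 0 \<Longrightarrow> poly_act ((monom 1 N - 1) ^ c) y = 0"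
begin

abbreviation delta :: "int poly" where
  "delta \<equiv> monom 1 N - 1"

lemma fixed_image_trivial:
  assumes "(phi ^^ N) (poly_act (delta ^ c) y) = poly_act (delta ^ c) y"
  shows "poly_act (delta ^ c) y = 0"
proof (rule kernel_stable)
  have "poly_act (delta ^ Suc c) y = poly_act delta (poly_act (delta ^ c) y)"
    by (simp add: mult.commute)
  also have "\<dots> = (phi ^^ N) (poly_act (delta ^ c) y) - poly_act (delta ^ c) y"
    by (simp only: poly.scale_left_diff_distrib poly_act_monom poly.scale_one)
  also have "\<dots> = 0"
    using assms by simp
  finally show "poly_act (delta ^ Suc c) y = 0" .
qed

definition cong_image :: "'k \<Rightarrow> 'k \<Rightarrow> bool" where
  "cong_image x y \<longleftrightarrow> x - y \<in> range (poly_act (delta ^ c))"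

lemma cong_image_refl: "cong_image x x"
  unfolding cong_image_def by (metis diff_self poly.scale_zero_right rangeI)

lemma cong_image_add: "cong_image x y \<Longrightarrow> cong_image x' y' \<Longrightarrow> cong_image (x + x') (y + y')"
  unfolding cong_image_def
  by (auto simp: algebra_simps simp flip: poly.scale_right_distrib)

lemma fixed_cong_image_eq:
  assumes "(phi ^^ N) x = x" "(phi ^^ N) y = y" "cong_image x z" "cong_image y z"
  shows "x = y"
proof -
  obtain u v where "x - z = poly_act (delta ^ c) u" "y - z = poly_act (delta ^ c) v"
    using assms(3,4) unfolding cong_image_def by blast
  then have xy: "x - y = poly_act (delta ^ c) (u - v)"
    by (simp add: poly.scale_right_diff_distrib algebra_simps)
  have "(phi ^^ N) (x - y) = x - y"
    using assms(1,2) by (simp add: additive.diff[OF additive_funpow[OF additive_phi]])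
  then have "poly_act (delta ^ c) (u - v) = 0"
    unfolding xy by (rule fixed_image_trivial)
  with xy show ?thesis by simp
qed

lemma cong_image_funpow:
  "cong_image ((phi ^^ (N * q)) e) (\<Sum>i<c. nat_scale (q choose i) (poly_act (delta ^ i) e))"
proof -
  obtain R where R: "(delta + 1) ^ q = (\<Sum>k<c. of_nat (q choose k) * delta ^ k) + delta ^ c * R"
    using binomial_split_power by blast
  have "(phi ^^ (N * q)) e = poly_act ((delta + 1) ^ q) e"
    by (simp add: poly_act_monom_power)
  also have "\<dots> = (\<Sum>i<c. nat_scale (q choose i) (poly_act (delta ^ i) e)) + poly_act (delta ^ c) (poly_act R e)"
    unfolding R
    by (simp add: poly.scale_left_distrib poly.scale_sum_left poly_act_of_nat flip: poly.scale_scale)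
  finally show ?thesis
    unfolding cong_image_def by (simp del: poly.scale_scale)
qed

definition orbit_segment :: "'k set \<Rightarrow> 'k set" where
  "orbit_segment B = (\<lambda>(s, b). (phi ^^ s) b) ` ({..<N} \<times> B)"

definition coords_sum :: "'k set \<Rightarrow> ('k \<times> nat \<Rightarrow> nat) \<Rightarrow> 'k" where
  "coords_sum E n = (\<Sum>x\<in>E \<times> {..<c}. nat_scale (n x) (poly_act (delta ^ snd x) (fst x)))"

lemma coords_sum_add: "coords_sum E (\<lambda>x. n x + n' x) = coords_sum E n + coords_sum E n'"
  unfolding coords_sum_def by (simp add: nat_scale_add_left sum.distrib)

lemma coords_sum_single:
  assumes "finite E" "e \<in> E"
  shows "coords_sum E (\<lambda>x. if fst x = e then k (snd x) else 0)
    = (\<Sum>i<c. nat_scale (k i) (poly_act (delta ^ i) e))"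
proof -
  have "coords_sum E (\<lambda>x. if fst x = e then k (snd x) else 0)
      = (\<Sum>e'\<in>E. if e' = e then (\<Sum>i<c. nat_scale (k i) (poly_act (delta ^ i) e)) else 0)"
    unfolding coords_sum_def sum.cartesian_product' by (intro sum.cong) auto
  also have "\<dots> = (\<Sum>i<c. nat_scale (k i) (poly_act (delta ^ i) e))"
    using assms by simp
  finally show ?thesis .
qed

lemma shift_sum_cong_coords_sum:
  assumes "finite E"
  shows "(\<And>q e. (q, e) \<in> set Lq \<Longrightarrow> q \<le> Q \<and> e \<in> E) \<Longrightarrow>
    \<exists>n. (\<forall>x\<in>E \<times> {..<c}. n x \<le> length Lq * (Q + 1) ^ c)
      \<and> cong_image (\<Sum>(q, e)\<leftarrow>Lq. (phi ^^ (N * q)) e) (coords_sum E n)"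
proof (induct Lq)
  case Nil
  show ?case
    by (intro exI[of _ "\<lambda>_. 0"]) (simp add: coords_sum_def cong_image_refl)
next
  case (Cons qe Lq)
  obtain q e where qe: "qe = (q, e)" by fastforce
  have q: "q \<le> Q" and e: "e \<in> E"
    using Cons.prems[of q e] by (simp_all add: qe)
  have "\<exists>n. (\<forall>x\<in>E \<times> {..<c}. n x \<le> length Lq * (Q + 1) ^ c)
      \<and> cong_image (\<Sum>(q, e)\<leftarrow>Lq. (phi ^^ (N * q)) e) (coords_sum E n)"
    using Cons.prems by (intro Cons.hyps) (meson list.set_intros(2))
  then obtain n where n: "\<forall>x\<in>E \<times> {..<c}. n x \<le> length Lq * (Q + 1) ^ c"
    and cong: "cong_image (\<Sum>(q, e)\<leftarrow>Lq. (phi ^^ (N * q)) e) (coords_sum E n)"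
    by blast
  define d where "d x = (if fst x = e then q choose snd x else 0)" for x :: "'k \<times> nat"
  have "d x + n x \<le> length (qe # Lq) * (Q + 1) ^ c" if x: "x \<in> E \<times> {..<c}" for x
  proof -
    have "d x \<le> (Q + 1) ^ c"
      using binomial_le_power_bound[OF q, of "snd x"] x by (auto simp: d_def)
    moreover have "n x \<le> length Lq * (Q + 1) ^ c" using n x by blast
    ultimately show ?thesis by simp
  qed
  moreover have "cong_image (\<Sum>(q, e)\<leftarrow>qe # Lq. (phi ^^ (N * q)) e) (coords_sum E (\<lambda>x. d x + n x))"
  proof -
    have "coords_sum E d = (\<Sum>i<c. nat_scale (q choose i) (poly_act (delta ^ i) e))"
      unfolding d_def by (rule coords_sum_single[OF assms e])
    moreover have "(\<Sum>(q, e)\<leftarrow>qe # Lq. (phi ^^ (N * q)) e) = (phi ^^ (N * q)) e + (\<Sum>(q, e)\<leftarrow>Lq. (phi ^^ (N * q)) e)"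
      by (simp add: qe)
    ultimately show ?thesis
      using cong_image_add[OF cong_image_funpow cong] by (simp only: coords_sum_add)
  qed
  ultimately show ?case by (intro exI[of _ "\<lambda>x. d x + n x"]) blast
qed

lemma funpow_shift_phi_pow:
  assumes "\<bar>m\<bar> \<le> int Q" "b \<in> B"
  obtains q e where "q \<le> 2 * Q" "e \<in> orbit_segment B"
    "(phi ^^ (Q * N)) (phi_pow phi m b) = (phi ^^ (N * q)) e"
proof -
  define t where "t = nat (int (Q * N) + m)"
  have "int Q \<le> int (Q * N)" using N_pos by (simp only: of_nat_le_iff) simp
  moreover have "int (2 * Q * N) = 2 * int (Q * N)" by simp
  ultimately have "int (Q * N) + m \<ge> 0" "t \<le> 2 * Q * N"
    using assms(1) unfolding t_def by linarith+
  have "(phi ^^ (Q * N)) (phi_pow phi m b) = (phi ^^ (N * (t div N) + t mod N)) b"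
    using \<open>int (Q * N) + m \<ge> 0\<close> by (simp add: funpow_phi_pow t_def)
  also have "\<dots> = (phi ^^ (N * (t div N))) ((phi ^^ (t mod N)) b)"
    by (simp only: funpow_add comp_apply)
  finally have shifted: "(phi ^^ (Q * N)) (phi_pow phi m b) = (phi ^^ (N * (t div N))) ((phi ^^ (t mod N)) b)" .
  show ?thesis
  proof (rule that[OF _ _ shifted])
    show "t div N \<le> 2 * Q"
      using div_le_mono[OF \<open>t \<le> 2 * Q * N\<close>, of N] N_pos by simp
    show "(phi ^^ (t mod N)) b \<in> orbit_segment B"
      using assms(2) N_pos unfolding orbit_segment_def by force
  qed
qed

lemma funpow_shift_twisted_sum:
  assumes "\<forall>(m, b)\<in>set L. b \<in> B \<and> \<bar>m\<bar> \<le> int Q"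
  shows "\<exists>Lq. length Lq = length L \<and> (\<forall>(q, e)\<in>set Lq. q \<le> 2 * Q \<and> e \<in> orbit_segment B)
    \<and> (phi ^^ (Q * N)) (\<Sum>(m, b)\<leftarrow>L. phi_pow phi m b) = (\<Sum>(q, e)\<leftarrow>Lq. (phi ^^ (N * q)) e)"
  using assms
proof (induct L)
  case Nil
  show ?case by (simp add: additive.zero[OF additive_funpow[OF additive_phi]])
next
  case (Cons mb L)
  obtain m b where mb: "mb = (m, b)" by fastforce
  then have "\<bar>m\<bar> \<le> int Q" "b \<in> B" using Cons.prems by auto
  then obtain q e where "q \<le> 2 * Q" "e \<in> orbit_segment B"
    "(phi ^^ (Q * N)) (phi_pow phi m b) = (phi ^^ (N * q)) e"
    by (rule funpow_shift_phi_pow)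
  moreover obtain Lq where "length Lq = length L" "\<forall>(q, e)\<in>set Lq. q \<le> 2 * Q \<and> e \<in> orbit_segment B"
    "(phi ^^ (Q * N)) (\<Sum>(m, b)\<leftarrow>L. phi_pow phi m b) = (\<Sum>(q, e)\<leftarrow>Lq. (phi ^^ (N * q)) e)"
    using Cons by auto
  ultimately show ?case
    by (intro exI[of _ "(q, e) # Lq"])
      (simp add: mb additive.add[OF additive_funpow[OF additive_phi]])
qed

lemma fixed_twisted_sum_as_shift_sum:
  assumes fixed: "(phi ^^ N) a = a" and a: "a \<in> twisted_sums B Q r"
  obtains Lq where "length Lq \<le> r" "\<And>q e. (q, e) \<in> set Lq \<Longrightarrow> q \<le> 2 * Q \<and> e \<in> orbit_segment B"
    "a = (\<Sum>(q, e)\<leftarrow>Lq. (phi ^^ (N * q)) e)"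
proof -
  obtain L where L: "length L \<le> r" "\<forall>(m, b)\<in>set L. b \<in> B \<and> \<bar>m\<bar> \<le> int Q"
    and a_eq: "a = (\<Sum>(m, b)\<leftarrow>L. phi_pow phi m b)"
    using a unfolding twisted_sums_def by blast
  obtain Lq where Lq: "length Lq = length L" "\<forall>(q, e)\<in>set Lq. q \<le> 2 * Q \<and> e \<in> orbit_segment B"
    and shifted: "(phi ^^ (Q * N)) a = (\<Sum>(q, e)\<leftarrow>Lq. (phi ^^ (N * q)) e)"
    using funpow_shift_twisted_sum[OF L(2)] unfolding a_eq by blast
  have "a = (phi ^^ (Q * N)) a"
    using funpow_fixed_dvd[OF fixed, of "Q * N"] by simp
  then show ?thesis
    using that[of Lq] Lq L(1) shifted by auto
qed

text \<open>A fixed point of \<open>\<phi>\<^sup>N\<close> in \<open>twisted_sums B Q r\<close> is determined by its class modulo the image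
  of \<open>\<delta>\<^sup>c\<close>, and that class is represented by coordinates bounded polynomially in \<open>r\<close>.\<close>
lemma card_fixed_twisted_sums:
  fixes Q r :: nat
  assumes "finite B"
  defines "Y \<equiv> {a \<in> twisted_sums B Q r. (phi ^^ N) a = a}"
  shows "finite Y \<and> card Y \<le> (r * (2 * Q + 1) ^ c + 1) ^ (card (orbit_segment B) * c)"
proof -
  define E where "E = orbit_segment B"
  define F where "F = (E \<times> {..<c}) \<rightarrow>\<^sub>E {..r * (2 * Q + 1) ^ c}"
  have finE: "finite E" using assms(1) by (simp add: E_def orbit_segment_def)
  have "\<exists>n\<in>F. cong_image a (coords_sum E n)" if a: "a \<in> Y" for a
  proof -
    obtain Lq where Lq: "length Lq \<le> r" "\<And>q e. (q, e) \<in> set Lq \<Longrightarrow> q \<le> 2 * Q \<and> e \<in> E"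
      and a_eq: "a = (\<Sum>(q, e)\<leftarrow>Lq. (phi ^^ (N * q)) e)"
      using a by (auto simp: Y_def E_def elim: fixed_twisted_sum_as_shift_sum)
    obtain n where n: "\<forall>x\<in>E \<times> {..<c}. n x \<le> length Lq * (2 * Q + 1) ^ c"
      and cong: "cong_image a (coords_sum E n)"
      using shift_sum_cong_coords_sum[OF finE Lq(2)] a_eq by blast
    have "n x \<le> r * (2 * Q + 1) ^ c" if "x \<in> E \<times> {..<c}" for x
      using n[rule_format, OF that] Lq(1) by (meson le_trans mult_le_mono1)
    then have "restrict n (E \<times> {..<c}) \<in> F"
      unfolding F_def by auto
    moreover have "coords_sum E (restrict n (E \<times> {..<c})) = coords_sum E n"
      unfolding coords_sum_def by (intro sum.cong) auto
    ultimately show ?thesis using cong by metis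
  qed
  then obtain g where g: "\<And>a. a \<in> Y \<Longrightarrow> g a \<in> F \<and> cong_image a (coords_sum E (g a))"
    by metis
  have "inj_on g Y"
  proof (rule inj_onI)
    fix a a' assume "a \<in> Y" "a' \<in> Y" "g a = g a'"
    then show "a = a'"
      using g[of a] g[of a'] by (intro fixed_cong_image_eq[of a a']) (auto simp: Y_def)
  qed
  moreover have "g ` Y \<subseteq> F" using g by blast
  moreover have "finite F" unfolding F_def using finE by (simp add: finite_PiE)
  ultimately have "finite Y" "card Y \<le> card F"
    by (auto intro: card_inj_on_le inj_on_finite)
  moreover have "card F = (r * (2 * Q + 1) ^ c + 1) ^ (card E * c)"
    unfolding F_def using finE by (simp add: card_PiE card_cartesian_product)
  ultimately show ?thesis by (simp add: E_def)
qed

lemma card_periodic_word_ball_le: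
  assumes "finite S" "\<And>s. s \<in> S \<Longrightarrow> \<bar>snd s\<bar> \<le> int C"
  shows "card ((\<lambda>a. (a, 0::int)) ` periodic_pts phi \<inter> word_ball phi S r)
    \<le> (r * (2 * (C * r) + 1) ^ c + 1) ^ (card (orbit_segment (fst ` S)) * c)"
proof -
  define Y where "Y = {a \<in> twisted_sums (fst ` S) (C * r) r. (phi ^^ N) a = a}"
  have Y: "finite Y \<and> card Y \<le> (r * (2 * (C * r) + 1) ^ c + 1) ^ (card (orbit_segment (fst ` S)) * c)"
    unfolding Y_def using assms(1) by (intro card_fixed_twisted_sums) simp
  have "(\<lambda>a. (a, 0::int)) ` periodic_pts phi \<inter> word_ball phi S r \<subseteq> (\<lambda>a. (a, 0)) ` Y"
    using word_ball_twisted_sums[OF assms(2)] periodic_fixed by (force simp: Y_def)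
  then have "card ((\<lambda>a. (a, 0::int)) ` periodic_pts phi \<inter> word_ball phi S r) \<le> card ((\<lambda>a. (a, 0::int)) ` Y)"
    using Y by (intro card_mono) simp_all
  also have "\<dots> \<le> card Y"
    by (rule card_image_le) (use Y in blast)
  finally show ?thesis using Y by linarith
qed

end

theorem corollary3p13:
  fixes phi :: "'k::ab_group_add \<Rightarrow> 'k" and S :: "('k \<times> int) set"
  assumes "is_aut phi"
    and "finite S"
    and "symmetric_set phi S"
    and "generates phi S"
  shows "\<exists>p :: real poly. \<forall>r. real (card ((\<lambda>a. (a, 0::int)) ` periodic_pts phi \<inter> word_ball phi S r)) \<le> poly p (real r)"
proof -
  interpret abelian_aut phi by unfold_locales (rule assms(1))
  obtain C where C: "\<And>s. s \<in> S \<Longrightarrow> \<bar>snd s\<bar> \<le> int C"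
    using finite_abs_bounded[OF assms(2)] by blast
  have A: "finite (fst ` S)" "invariant_span (fst ` S) = UNIV"
    using assms(2) invariant_span_generators[OF assms(4) C] by simp_all
  obtain N where N: "N > 0" "\<And>a. a \<in> periodic_pts phi \<Longrightarrow> (phi ^^ N) a = a"
    using periodic_pts_fixed_by_power[OF A] by blast
  obtain c where c: "\<And>y. poly_act ((monom 1 N - 1) ^ Suc c) y = 0 \<Longrightarrow> poly_act ((monom 1 N - 1) ^ c) y = 0"
    using poly_act_power_kernel_stabilizes[OF A] by blast
  interpret periodic_counting phi N c
    using N c by unfold_locales auto
  show ?thesis
    by (rule polynomially_bounded[OF card_periodic_word_ball_le[OF assms(2) C]])
qed

end
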